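(* Let $Z=\{(x_i,y_i)\}_{i=1,\dots,N}$ be a finite sample with $x_i\in\mathcal{X}$ and $y_i\in\{-1,1\}$, and let $h^t,h^s:\mathcal{X}\to\{-1,1\}$ be two classifiers (teacher and student). Assume $R_Z(h^t)>0$ and $R^{h^t}_{acc(h^t)}(h^s)>0$. Then $$R_{Z}(h^s)\leq R_{Z}(h^t)\iff \frac{R_{err(h^t)}^{h^t}(h^s)}{R_{acc(h^t)}^{h^t}(h^s)}\geq \frac{1}{R_{Z}(h^t)}-1.$$
   Context: For a finite nonempty (multi)set $S$ of labelled pairs $(x,y)$ and functions $f,g:\mathcal{X}\to\{-1,1\}$, define the empirical disagreement risk $R^{f}_{S}(g):=\frac{1}{|S|}\sum_{(x,y)\in S}\mathbb{1}[f(x)\neq g(x)]$, and the empirical risk $R_S(g):=\frac{1}{|S|}\sum_{(x,y)\in S}\mathbb{1}[y\neq g(x)]$. Here $\mathbb{1}[\cdot]$ is $1$ if the condition holds and $0$ otherwise. The sets $acc(h^t):=\{(x,y)\in Z : h^t(x)=y\}$ and $err(h^t):=\{(x,y)\in Z : h^t(x)\neq y\}$ are the sub-multisets of $Z$ on which the teacher is correct, respectively wrong. *)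

theory Defs
  imports Complex_Main "HOL-Library.Multiset"
begin

text \<open>Samples are finite multisets of labelled pairs (x, y) with labels y in {-1, 1} (as integers).\<close>

definition emp_risk :: "('x \<times> int) multiset \<Rightarrow> ('x \<Rightarrow> int) \<Rightarrow> real" where
  "emp_risk S g = (\<Sum>p\<in>#S. (if snd p \<noteq> g (fst p) then 1 else 0 :: real)) / real (size S)"

definition dis_risk :: "('x \<Rightarrow> int) \<Rightarrow> ('x \<times> int) multiset \<Rightarrow> ('x \<Rightarrow> int) \<Rightarrow> real" where
  "dis_risk f S g = (\<Sum>p\<in>#S. (if f (fst p) \<noteq> g (fst p) then 1 else 0 :: real)) / real (size S)"

definition acc :: "('x \<Rightarrow> int) \<Rightarrow> ('x \<times> int) multiset \<Rightarrow> ('x \<times> int) multiset" where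
  "acc h Z = filter_mset (\<lambda>p. h (fst p) = snd p) Z"

definition err :: "('x \<Rightarrow> int) \<Rightarrow> ('x \<times> int) multiset \<Rightarrow> ('x \<times> int) multiset" where
  "err h Z = filter_mset (\<lambda>p. h (fst p) \<noteq> snd p) Z"

end

theory Submission
  imports Defs
begin

text \<open>On the samples where the teacher is right, the student errs exactly where it disagrees
  with the teacher; with binary labels, on the samples where the teacher is wrong the student
  errs exactly where it agrees with the teacher. Writing \<open>a\<close> and \<open>e\<close> for the numbers of
  disagreements on \<open>acc(h\<^sup>t)\<close> and \<open>err(h\<^sup>t)\<close>, the student makes \<open>a + |err(h\<^sup>t)| - e\<close> mistakes
  against the teacher's \<open>|err(h\<^sup>t)|\<close>, so it is at least as good iff \<open>a \<le> e\<close>. The ratio condition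
  says the same, since \<open>1 / R\<^sub>Z(h\<^sup>t) - 1 = |acc(h\<^sup>t)| / |err(h\<^sup>t)|\<close>.\<close>

definition n_mistakes :: "('x \<Rightarrow> int) \<Rightarrow> ('x \<times> int) multiset \<Rightarrow> nat" where
  "n_mistakes g S = size (filter_mset (\<lambda>p. snd p \<noteq> g (fst p)) S)"

definition n_disagree :: "('x \<Rightarrow> int) \<Rightarrow> ('x \<times> int) multiset \<Rightarrow> ('x \<Rightarrow> int) \<Rightarrow> nat" where
  "n_disagree f S g = size (filter_mset (\<lambda>p. f (fst p) \<noteq> g (fst p)) S)"

lemma sum_mset_indicator:
  "(\<Sum>p\<in>#S. if P p then 1 else 0) = (of_nat (size (filter_mset P S)) :: 'a :: semiring_1)"
  by (induction S) auto

lemma emp_risk_eq_n_mistakes: "emp_risk S g = real (n_mistakes g S) / real (size S)"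
  by (simp add: emp_risk_def n_mistakes_def sum_mset_indicator)

lemma dis_risk_eq_n_disagree: "dis_risk f S g = real (n_disagree f S g) / real (size S)"
  by (simp add: dis_risk_def n_disagree_def sum_mset_indicator)

lemma acc_plus_err: "acc h Z + err h Z = Z"
  by (simp add: acc_def err_def multiset_partition[symmetric])

lemma size_acc_plus_err: "size (acc h Z) + size (err h Z) = size Z"
  by (metis acc_plus_err size_union)

lemma n_mistakes_union: "n_mistakes g (S + T) = n_mistakes g S + n_mistakes g T"
  by (simp add: n_mistakes_def)

lemma n_mistakes_acc: "n_mistakes g (acc h Z) = n_disagree h (acc h Z) g"
  unfolding n_mistakes_def n_disagree_def acc_def
  by (rule arg_cong[where f = size], rule filter_mset_cong) auto

lemma n_mistakes_eq_size_err: "n_mistakes h Z = size (err h Z)"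
  unfolding n_mistakes_def err_def
  by (rule arg_cong[where f = size], rule filter_mset_cong) auto

lemma n_mistakes_err:
  assumes labels: "\<forall>p\<in>#Z. snd p \<in> {-1, 1}"
    and h_range: "\<forall>x. h x \<in> {-1, 1}" and g_range: "\<forall>x. g x \<in> {-1, 1}"
  shows "n_mistakes g (err h Z) + n_disagree h (err h Z) g = size (err h Z)"
proof -
  have "filter_mset (\<lambda>p. snd p \<noteq> g (fst p)) (err h Z)
      = filter_mset (\<lambda>p. \<not> h (fst p) \<noteq> g (fst p)) (err h Z)"
  proof (rule filter_mset_cong)
    fix p assume "p \<in># err h Z"
    then have "p \<in># Z" "h (fst p) \<noteq> snd p" by (auto simp: err_def)
    then show "(snd p \<noteq> g (fst p)) = (\<not> h (fst p) \<noteq> g (fst p))"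
      using labels h_range[rule_format, of "fst p"] g_range[rule_format, of "fst p"] by auto
  qed simp
  then show ?thesis
    unfolding n_mistakes_def n_disagree_def
    by (metis multiset_partition size_union add.commute)
qed

lemma emp_risk_le_iff_n_disagree:
  assumes labels: "\<forall>p\<in>#Z. snd p \<in> {-1, 1}"
    and h_range: "\<forall>x. h x \<in> {-1, 1}" and g_range: "\<forall>x. g x \<in> {-1, 1}"
    and nonempty: "Z \<noteq> {#}"
  shows "emp_risk Z g \<le> emp_risk Z h \<longleftrightarrow> n_disagree h (acc h Z) g \<le> n_disagree h (err h Z) g"
proof -
  have split: "n_mistakes f Z = n_mistakes f (acc h Z) + n_mistakes f (err h Z)" for f
    by (metis acc_plus_err n_mistakes_union)
  have "n_mistakes g Z \<le> n_mistakes h Z \<longleftrightarrow> n_disagree h (acc h Z) g \<le> n_disagree h (err h Z) g"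
    using n_mistakes_err[OF labels h_range g_range]
    by (simp add: split[of g] n_mistakes_acc n_mistakes_eq_size_err[of h Z]) linarith
  then show ?thesis
    using nonempty by (simp add: emp_risk_eq_n_mistakes divide_le_cancel zero_less_iff_neq_zero)
qed

lemma inverse_emp_risk_minus_one:
  assumes "err h Z \<noteq> {#}"
  shows "1 / emp_risk Z h - 1 = real (size (acc h Z)) / real (size (err h Z))"
proof -
  have "emp_risk Z h = real (size (err h Z)) / (real (size (acc h Z)) + real (size (err h Z)))"
    by (simp add: emp_risk_eq_n_mistakes n_mistakes_eq_size_err flip: size_acc_plus_err[of h Z])
  then show ?thesis
    using assms by (simp add: field_simps)
qed

theorem theorem1:
  fixes Z :: "('x \<times> int) multiset" and ht hs :: "'x \<Rightarrow> int"
  assumes labels: "\<forall>p\<in>#Z. snd p \<in> {-1, 1}"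
    and ht_range: "\<forall>x. ht x \<in> {-1, 1}"
    and hs_range: "\<forall>x. hs x \<in> {-1, 1}"
    and pos1: "emp_risk Z ht > 0"
    and pos2: "dis_risk ht (acc ht Z) hs > 0"
  shows "emp_risk Z hs \<le> emp_risk Z ht \<longleftrightarrow>
         dis_risk ht (err ht Z) hs / dis_risk ht (acc ht Z) hs \<ge> 1 / emp_risk Z ht - 1"
proof -
  define a where "a = real (n_disagree ht (acc ht Z) hs)"
  define e where "e = real (n_disagree ht (err ht Z) hs)"
  define nA where "nA = real (size (acc ht Z))"
  define nE where "nE = real (size (err ht Z))"
  have "Z \<noteq> {#}" and err_nonempty: "err ht Z \<noteq> {#}"
    using pos1 by (auto simp: emp_risk_eq_n_mistakes n_mistakes_eq_size_err)
  then have student_iff: "emp_risk Z hs \<le> emp_risk Z ht \<longleftrightarrow> a \<le> e"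
    using emp_risk_le_iff_n_disagree[OF labels ht_range hs_range] by (simp add: a_def e_def)
  have threshold: "1 / emp_risk Z ht - 1 = nA / nE"
    using inverse_emp_risk_minus_one[OF err_nonempty] by (simp add: nA_def nE_def)
  have ratio: "dis_risk ht (err ht Z) hs / dis_risk ht (acc ht Z) hs = (e / nE) / (a / nA)"
    by (simp add: dis_risk_eq_n_disagree a_def e_def nA_def nE_def)
  have "a > 0" "nA > 0"
    using pos2 by (auto simp: dis_risk_eq_n_disagree a_def nA_def zero_less_divide_iff)
  moreover have "nE > 0"
    using err_nonempty by (simp add: nE_def zero_less_iff_neq_zero)
  ultimately have "a \<le> e \<longleftrightarrow> (e / nE) / (a / nA) \<ge> nA / nE"
    by (simp add: field_simps)
  then show ?thesis
    unfolding student_iff threshold ratio .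
qed

end
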